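(* Let $(x''_n)_n=((x_n,x'_n))_n$ be a sequence in $G''=G\times G'$ with $d(x_n,o)\to\infty$ and $d'(x'_n,o')\to\infty$. Then, after passing to a subsequence, the perturbed diamonds $D_n(x''_n)$ converge in the Fell topology to either $\emptyset$, or $G''$, or a set $C$ for which there exist $\theta\in\partial G$, $\theta'\in\partial G'$ and $\delta\in\mathbb R$ with $$HB((\theta,\theta'),\delta-2/c)\subseteq C\subseteq HB((\theta,\theta'),\delta+1/c),$$ where these are horoballs of $(G'',\rho_c)$ (so in particular of type II, with the same center).
   Context: $G,G'$ are finitely generated groups with neutral elements $o,o'$, word metrics $d,d'$ from Cayley graphs with respect to finite generating sets, ball volumes $v_n,v'_n$, growth rates $a=\lim v_n^{1/n}>1$, $a'=\lim (v'_n)^{1/n}>1$, and $c:=\log a/\log a'$. $G''=G\times G'$ has origin $o''=(o,o')$ and metric $\rho_c((x,x'),(y,y'))=d(x,y)+d'(x',y')/c$. Fix a non-decreasing $f:\mathbb Z_{\ge0}\to\mathbb Z_{\ge0}$ and a strictly increasing sequence $(r_j)$ in $\mathbb Z_{\ge 0}$ such that $f(0)=0$, with $r'_j:=f(r_j)$ one has $0<\inf_n v'_{r'_n}/v_{r_n}\le\sup_n v'_{r'_n}/v_{r_n}<\infty$, and $\forall m\,\exists N\,\forall n\ge N: |f(n+m)-f(n)-cm|\le1$ (such $f,(r_j)$ exist). The perturbed diamond with parameter $n$ and center $x''=(x,x')$ is $D_n(x''):=\bigcup_{t=0}^{r_n}\{(y,y'): d(x,y)=r_n-t,\ d'(x',y')\le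 f(t)\}$. Fell convergence of subsets $S_n\to S$ of the countable set $G''$ means pointwise convergence of indicator functions. Horoboundary of a countable set $H$ with origin $o_H$ and boundedly finite metric $\rho$: with $\rho_x(y)=\rho(x,y)-\rho(x,o_H)$, $\overline H$ is the closure of $\{\rho_x\}$ in the pointwise topology among $1$-Lipschitz functions vanishing at $o_H$, $\partial H=\overline H\setminus H$, and for $\theta\in\partial H$ with function $d_\theta$, the horoball is $HB(\theta,\delta):=\{x: d_\theta(x)\le\delta\}$. For $\theta\in\partial G$, $\theta'\in\partial G'$, $(\theta,\theta')$ denotes the point of $\partial G''$ given by the function $(y,y')\mapsto d_\theta(y)+d_{\theta'}(y')/c$; horoballs centered at such points are called of type II. *)

theory Defs
  imports "HOL-Analysis.Analysis"
begin

text \<open>Groups are modelled as types of class group_add (not necessarily abelian);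
  the neutral element is 0 and the group law is +.\<close>

definition generates :: "'a::group_add set \<Rightarrow> bool" where
  "generates S \<longleftrightarrow> (\<forall>g. \<exists>xs. set xs \<subseteq> S \<union> uminus ` S \<and> sum_list xs = g)"

definition word_length :: "'a::group_add set \<Rightarrow> 'a \<Rightarrow> nat" where
  "word_length S g = (LEAST n. \<exists>xs. length xs = n \<and> set xs \<subseteq> S \<union> uminus ` S \<and> sum_list xs = g)"

definition word_dist :: "'a::group_add set \<Rightarrow> 'a \<Rightarrow> 'a \<Rightarrow> nat" where
  "word_dist S x y = word_length S (- x + y)"

definition ball_volume :: "'a::group_add set \<Rightarrow> nat \<Rightarrow> nat" where
  "ball_volume S n = card {x. word_dist S 0 x \<le> n}"

definition rho_c :: "'a::group_add set \<Rightarrow> 'b::group_add set \<Rightarrow> real \<Rightarrow> 'a \<times> 'b \<Rightarrow> 'a \<times> 'b \<Rightarrow> real" where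
  "rho_c S S' c p q = real (word_dist S (fst p) (fst q)) + real (word_dist S' (snd p) (snd q)) / c"

definition perturbed_diamond ::
  "'a::group_add set \<Rightarrow> 'b::group_add set \<Rightarrow> (nat \<Rightarrow> nat) \<Rightarrow> nat \<Rightarrow> 'a \<times> 'b \<Rightarrow> ('a \<times> 'b) set" where
  "perturbed_diamond S S' f R x =
     (\<Union>t\<in>{0..R}. {(y, y'). word_dist S (fst x) y = R - t \<and> word_dist S' (snd x) y' \<le> f t})"

text \<open>Fell convergence on a countable discrete set: pointwise convergence of indicators.\<close>
definition fell_converges :: "(nat \<Rightarrow> 'h set) \<Rightarrow> 'h set \<Rightarrow> bool" where
  "fell_converges A C \<longleftrightarrow> (\<forall>z. (\<lambda>k. indicator (A k) z :: real) \<longlonglongrightarrow> indicator C z)"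

text \<open>Horofunction compactification (pointwise topology on functions to the reals).\<close>
definition horo_fun :: "('h \<Rightarrow> 'h \<Rightarrow> real) \<Rightarrow> 'h \<Rightarrow> 'h \<Rightarrow> 'h \<Rightarrow> real" where
  "horo_fun \<rho> o' x = (\<lambda>y. \<rho> x y - \<rho> x o')"

definition horo_closure :: "('h \<Rightarrow> 'h \<Rightarrow> real) \<Rightarrow> 'h \<Rightarrow> ('h \<Rightarrow> real) set" where
  "horo_closure \<rho> o' = closure (range (horo_fun \<rho> o'))"

definition horoboundary :: "('h \<Rightarrow> 'h \<Rightarrow> real) \<Rightarrow> 'h \<Rightarrow> ('h \<Rightarrow> real) set" where
  "horoboundary \<rho> o' = horo_closure \<rho> o' - range (horo_fun \<rho> o')"

definition horoball :: "('h \<Rightarrow> real) \<Rightarrow> real \<Rightarrow> 'h set" where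
  "horoball \<theta> \<delta> = {x. \<theta> x \<le> \<delta>}"

definition pair_horo :: "real \<Rightarrow> ('a \<Rightarrow> real) \<Rightarrow> ('b \<Rightarrow> real) \<Rightarrow> 'a \<times> 'b \<Rightarrow> real" where
  "pair_horo c \<theta> \<theta>' = (\<lambda>(y, y'). \<theta> y + \<theta>' y' / c)"

end

(*
  Write beta_n(y) = d(x_n, y) - d(x_n, o), beta'_n(y') = d'(x'_n, y') - d'(x'_n, o'),
  u_n = r_n - d(x_n, o) and w_n = f(u_n) - d'(x'_n, o'). Then (y, y') lies in D_n(x''_n) iff
  beta_n(y) <= u_n and beta'_n(y') <= w_n + f(u_n - beta_n(y)) - f(u_n). As |beta_n(y)| <= |y|
  and f is almost linear of slope c, once u_n -> oo membership is squeezed between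
  c beta_n(y) + beta'_n(y') <= w_n - 1 and c beta_n(y) + beta'_n(y') <= w_n + 1.

  Along a subsequence, either u_n stays bounded above or w_n -> -oo, and the diamonds
  eventually miss every point; or w_n -> +oo, and they eventually contain every point; or w_n
  stays bounded, and a diagonal subsequence makes beta_n, beta'_n, w_n and all memberships
  eventually constant. The limits theta, theta' of beta_n, beta'_n are horofunctions, and not
  of the form d(z, .) - d(z, o) since a far away x_n gives z a neighbour where the limit is
  smaller than at z; the limit set lies between the horoballs of (theta, theta') at levels
  near w/c.
*)
theory Submission
  imports Defs "HOL-Library.Diagonal_Subsequence"
begin

lemma word_length_attained:
  assumes "generates S"
  shows "\<exists>xs. length xs = word_length S g \<and> set xs \<subseteq> S \<union> uminus ` S \<and> sum_list xs = g"
proof -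
  from assms have "\<exists>n xs. length xs = n \<and> set xs \<subseteq> S \<union> uminus ` S \<and> sum_list xs = g"
    unfolding generates_def by blast
  from LeastI_ex[OF this] show ?thesis unfolding word_length_def .
qed

lemma word_length_le:
  assumes "set xs \<subseteq> S \<union> uminus ` S" "sum_list xs = g"
  shows "word_length S g \<le> length xs"
  unfolding word_length_def by (rule Least_le) (use assms in blast)

lemma word_length_0 [simp]: "word_length S 0 = 0"
  using word_length_le[of "[]" S 0] by simp

lemma word_length_eq_0_iff:
  assumes "generates S"
  shows "word_length S g = 0 \<longleftrightarrow> g = 0"
  using word_length_attained[OF assms, of g] by auto

lemma word_length_add_le:
  assumes "generates S"
  shows "word_length S (g + h) \<le> word_length S g + word_length S h"
proof -
  obtain xs where xs: "length xs = word_length S g" "set xs \<subseteq> S \<union> uminus ` S" "sum_list xs = g"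
    using word_length_attained[OF assms] by blast
  obtain ys where ys: "length ys = word_length S h" "set ys \<subseteq> S \<union> uminus ` S" "sum_list ys = h"
    using word_length_attained[OF assms] by blast
  have "word_length S (g + h) \<le> length (xs @ ys)"
    by (rule word_length_le) (use xs ys in auto)
  with xs ys show ?thesis by simp
qed

lemma sum_list_rev_map_uminus:
  "sum_list (rev (map uminus xs)) = - sum_list (xs :: 'a::group_add list)"
  by (induction xs) (auto simp: minus_add)

lemma word_length_uminus_le:
  assumes "generates S"
  shows "word_length S (- g) \<le> word_length S g"
proof -
  obtain xs where xs: "length xs = word_length S g" "set xs \<subseteq> S \<union> uminus ` S" "sum_list xs = g"
    using word_length_attained[OF assms] by blast
  have "word_length S (- g) \<le> length (rev (map uminus xs))"
    by (rule word_length_le) (use xs in \<open>auto simp: sum_list_rev_map_uminus\<close>)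
  with xs show ?thesis by simp
qed

lemma word_length_uminus:
  assumes "generates S"
  shows "word_length S (- g) = word_length S g"
  using word_length_uminus_le[OF assms, of g] word_length_uminus_le[OF assms, of "- g"] by simp

lemma word_dist_self [simp]: "word_dist S x x = 0"
  by (simp add: word_dist_def)

lemma word_dist_0_left: "word_dist S 0 y = word_length S y"
  by (simp add: word_dist_def)

lemma word_dist_commute:
  assumes "generates S"
  shows "word_dist S x y = word_dist S y x"
  unfolding word_dist_def using word_length_uminus[OF assms, of "- x + y"] by (simp add: minus_add)

lemma word_dist_triangle:
  assumes "generates S"
  shows "word_dist S x z \<le> word_dist S x y + word_dist S y z"
proof -
  have "- x + z = (- x + y) + (- y + z)" by (simp add: add.assoc)
  then show ?thesis
    unfolding word_dist_def using word_length_add_le[OF assms, of "- x + y" "- y + z"] by simp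
qed

lemma word_dist_eq_0_iff:
  assumes "generates S"
  shows "word_dist S x y = 0 \<longleftrightarrow> x = y"
proof -
  have "- x + y = 0 \<longleftrightarrow> x = y"
    by (metis add_minus_cancel add.right_neutral add.left_inverse)
  then show ?thesis
    unfolding word_dist_def word_length_eq_0_iff[OF assms] .
qed

lemma abs_word_dist_diff_le:
  assumes "generates S"
  shows "\<bar>int (word_dist S x y) - int (word_dist S x 0)\<bar> \<le> int (word_length S y)"
  using word_dist_triangle[OF assms, of x y 0] word_dist_triangle[OF assms, of x 0 y]
    word_dist_commute[OF assms, of y 0] by (simp add: word_dist_0_left)

lemma word_dist_step_closer:
  assumes "generates S" "x \<noteq> z"
  shows "\<exists>s\<in>S \<union> uminus ` S. word_dist S (z + s) x < word_dist S z x"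
proof -
  obtain xs where xs: "length xs = word_dist S z x" "set xs \<subseteq> S \<union> uminus ` S" "sum_list xs = - z + x"
    using word_length_attained[OF assms(1), of "- z + x"] unfolding word_dist_def by blast
  moreover have "word_dist S z x \<noteq> 0"
    using assms by (simp add: word_dist_eq_0_iff)
  ultimately obtain s rest where xs_eq: "xs = s # rest" by (cases xs) auto
  have "- z + x = s + sum_list rest"
    using xs(3) xs_eq by simp
  moreover have "- (z + s) + x = - s + (- z + x)"
    by (metis minus_add add.assoc)
  ultimately have "- (z + s) + x = sum_list rest"
    by simp
  then have "word_dist S (z + s) x \<le> length rest"
    unfolding word_dist_def by (intro word_length_le) (use xs(2) xs_eq in auto)
  moreover have "s \<in> S \<union> uminus ` S"
    using xs(2) xs_eq by simp
  ultimately show ?thesis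
    using xs(1) xs_eq by (intro bexI[of _ s]) simp_all
qed

lemma countable_UNIV_if_generates:
  fixes S :: "'a::group_add set"
  assumes "finite S" "generates S"
  shows "countable (UNIV :: 'a set)"
proof -
  have "UNIV = sum_list ` lists (S \<union> uminus ` S)"
    using assms(2) unfolding generates_def by (auto simp: image_iff) (metis in_listsI subsetD)
  moreover have "countable (lists (S \<union> uminus ` S))"
    using assms(1) by (intro countable_lists) (auto intro: countable_finite)
  ultimately show ?thesis by (metis countable_image)
qed

lemma pointwise_limit_in_horo_closure:
  assumes "\<And>y. ((\<lambda>n. horo_fun \<rho> b (x n) y) \<longlongrightarrow> \<theta> y) sequentially"
  shows "\<theta> \<in> horo_closure \<rho> b"
proof -
  have "limitin (product_topology (\<lambda>i. euclidean) UNIV) (\<lambda>n. horo_fun \<rho> b (x n)) \<theta> sequentially"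
    unfolding limitin_componentwise using assms by auto
  then have "((\<lambda>n. horo_fun \<rho> b (x n)) \<longlongrightarrow> \<theta>) sequentially"
    by (simp add: euclidean_product_topology)
  moreover have "eventually (\<lambda>n. horo_fun \<rho> b (x n) \<in> horo_closure \<rho> b) sequentially"
    unfolding horo_closure_def by (intro always_eventually) (auto intro: closure_subset[THEN subsetD])
  ultimately show ?thesis
    unfolding horo_closure_def
    by (intro Lim_in_closed_set[OF closed_closure _ trivial_limit_sequentially])
qed

lemma escaping_horofunction_limit_notin_range:
  fixes x :: "nat \<Rightarrow> 'a::group_add"
  assumes "finite S" "generates S"
    and esc: "filterlim (\<lambda>n. word_dist S (x n) 0) at_top sequentially"
    and lim: "\<And>y. eventually (\<lambda>n. horo_fun (\<lambda>x y. real (word_dist S x y)) 0 (x n) y = \<theta> y) sequentially"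
  shows "\<theta> \<notin> range (horo_fun (\<lambda>x y. real (word_dist S x y)) 0)"
proof
  assume "\<theta> \<in> range (horo_fun (\<lambda>x y. real (word_dist S x y)) 0)"
  then obtain z where z: "\<theta> = horo_fun (\<lambda>x y. real (word_dist S x y)) 0 z" by blast
  \<comment> \<open>such a \<theta> is minimal at z, but a far away x n has a neighbour z + s of z closer to it\<close>
  let ?N = "insert z ((+) z ` (S \<union> uminus ` S))"
  have "eventually (\<lambda>n. \<forall>y\<in>?N. horo_fun (\<lambda>x y. real (word_dist S x y)) 0 (x n) y = \<theta> y) sequentially"
    using assms(1) lim by (intro eventually_ball_finite) auto
  moreover have "eventually (\<lambda>n. Suc (word_dist S z 0) \<le> word_dist S (x n) 0) sequentially"
    using esc unfolding filterlim_at_top by blast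
  ultimately obtain n where n: "\<forall>y\<in>?N. horo_fun (\<lambda>x y. real (word_dist S x y)) 0 (x n) y = \<theta> y"
    and "Suc (word_dist S z 0) \<le> word_dist S (x n) 0"
    using eventually_happens'[OF sequentially_bot eventually_conj] by blast
  then have "x n \<noteq> z" by auto
  then obtain s where s: "s \<in> S \<union> uminus ` S" "word_dist S (z + s) (x n) < word_dist S z (x n)"
    using word_dist_step_closer[OF assms(2)] by blast
  have "word_dist S (x n) (z + s) < word_dist S (x n) z"
    using s(2) word_dist_commute[OF assms(2)] by metis
  moreover have "\<theta> (z + s) = horo_fun (\<lambda>x y. real (word_dist S x y)) 0 (x n) (z + s)"
    and "\<theta> z = horo_fun (\<lambda>x y. real (word_dist S x y)) 0 (x n) z"
    using n s(1) by auto
  ultimately have "\<theta> (z + s) < \<theta> z"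
    by (simp add: horo_fun_def)
  moreover have "\<theta> z \<le> \<theta> (z + s)"
    by (simp add: z horo_fun_def)
  ultimately show False by simp
qed

lemma escaping_horofunction_limit_in_horoboundary:
  fixes x :: "nat \<Rightarrow> 'a::group_add"
  assumes "finite S" "generates S"
    and "filterlim (\<lambda>n. word_dist S (x n) 0) at_top sequentially"
    and "\<And>y. eventually (\<lambda>n. horo_fun (\<lambda>x y. real (word_dist S x y)) 0 (x n) y = \<theta> y) sequentially"
  shows "\<theta> \<in> horoboundary (\<lambda>x y. real (word_dist S x y)) 0"
  using pointwise_limit_in_horo_closure[OF tendsto_eventually, OF assms(4)]
    escaping_horofunction_limit_notin_range[OF assms] unfolding horoboundary_def by blast

lemma mem_perturbed_diamond_iff:
  "(y, y') \<in> perturbed_diamond S S' f R p \<longleftrightarrow>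
     word_dist S (fst p) y \<le> R \<and> word_dist S' (snd p) y' \<le> f (R - word_dist S (fst p) y)"
proof
  assume "(y, y') \<in> perturbed_diamond S S' f R p"
  then obtain t where "t \<le> R" "word_dist S (fst p) y = R - t" "word_dist S' (snd p) y' \<le> f t"
    unfolding perturbed_diamond_def by auto
  then show "word_dist S (fst p) y \<le> R \<and> word_dist S' (snd p) y' \<le> f (R - word_dist S (fst p) y)"
    by (simp add: diff_diff_cancel)
next
  assume "word_dist S (fst p) y \<le> R \<and> word_dist S' (snd p) y' \<le> f (R - word_dist S (fst p) y)"
  then show "(y, y') \<in> perturbed_diamond S S' f R p"
    unfolding perturbed_diamond_def by (intro UN_I[of "R - word_dist S (fst p) y"]) auto
qed

lemma fell_convergesI:
  assumes "\<And>z. eventually (\<lambda>n. z \<in> A n \<longleftrightarrow> z \<in> C) sequentially"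
  shows "fell_converges A C"
  unfolding fell_converges_def
proof
  fix z
  show "(\<lambda>n. indicator (A n) z :: real) \<longlonglongrightarrow> indicator C z"
    using assms[of z] by (intro tendsto_eventually) (auto elim!: eventually_mono simp: indicator_def)
qed

lemma incseq_bounded_or_filterlim_at_top:
  fixes v :: "nat \<Rightarrow> 'a::linordered_idom"
  assumes "incseq v"
  shows "(\<exists>B. \<forall>n. \<bar>v n\<bar> \<le> B) \<or> filterlim v at_top sequentially"
proof (cases "\<exists>B. \<forall>n. v n \<le> B")
  case True
  then obtain B where "\<forall>n. v n \<le> B" ..
  moreover have "\<forall>n. v 0 \<le> v n"
    using assms by (simp add: incseq_def)
  ultimately have "v n \<le> max B (- v 0) \<and> - v n \<le> max B (- v 0)" for n
    by (meson max.coboundedI1 max.coboundedI2 neg_le_iff_le order_trans)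
  then show ?thesis
    by (metis abs_le_iff)
next
  case False
  have "eventually (\<lambda>n. Z \<le> v n) sequentially" for Z
  proof -
    obtain n0 where "Z \<le> v n0"
      using False by (meson linorder_not_le order_less_imp_le)
    then show ?thesis
      using assms unfolding eventually_sequentially incseq_def by (meson order_trans)
  qed
  then show ?thesis
    unfolding filterlim_at_top by blast
qed

lemma int_seq_subseq_cases:
  fixes v :: "nat \<Rightarrow> int"
  obtains \<phi> where "strict_mono \<phi>" "filterlim (\<lambda>n. v (\<phi> n)) at_top sequentially"
  | \<phi> where "strict_mono \<phi>" "filterlim (\<lambda>n. v (\<phi> n)) at_bot sequentially"
  | \<phi> B where "strict_mono \<phi>" "\<forall>n::nat. \<bar>v (\<phi> n)\<bar> \<le> B"
proof -
  obtain \<phi> where \<phi>: "strict_mono \<phi>" "monoseq (\<lambda>n. v (\<phi> n))"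
    using seq_monosub by blast
  consider "incseq (\<lambda>n. v (\<phi> n))" | "incseq (\<lambda>n. - v (\<phi> n))"
    using \<phi>(2) unfolding monoseq_iff decseq_eq_incseq by blast
  then show thesis
  proof cases
    case 1
    from incseq_bounded_or_filterlim_at_top[OF this] show thesis
      using that(1,3)[OF \<phi>(1)] by blast
  next
    case 2
    from incseq_bounded_or_filterlim_at_top[OF this] show thesis
    proof
      assume "\<exists>B. \<forall>n. \<bar>- v (\<phi> n)\<bar> \<le> B"
      then show thesis
        using that(3)[OF \<phi>(1)] by auto
    next
      assume "filterlim (\<lambda>n. - v (\<phi> n)) at_top sequentially"
      then have "eventually (\<lambda>n. - Z \<le> - v (\<phi> n)) sequentially" for Z
        unfolding filterlim_at_top by blast
      then have "filterlim (\<lambda>n. v (\<phi> n)) at_bot sequentially"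
        unfolding filterlim_at_bot by simp
      then show thesis
        using that(2)[OF \<phi>(1)] by blast
    qed
  qed
qed

lemma finite_range_imp_const_subseq:
  fixes X :: "nat \<Rightarrow> 'v"
  assumes "finite (range X)"
  shows "\<exists>\<phi> :: nat \<Rightarrow> nat. \<exists>v. strict_mono \<phi> \<and> (\<forall>n. X (\<phi> n) = v)"
proof -
  obtain v where "infinite (X -` {v})"
    using inf_img_fin_dom'[OF assms infinite_UNIV_nat] by auto
  from infinite_enumerate[OF this] obtain \<phi> :: "nat \<Rightarrow> nat"
    where "strict_mono \<phi>" "\<forall>n. X (\<phi> n) = v"
    by auto
  then show ?thesis by blast
qed

lemma diagonal_subseq_eventually_const:
  fixes X :: "'i \<Rightarrow> nat \<Rightarrow> 'v"
  assumes "countable (UNIV :: 'i set)" "\<And>i. finite (range (X i))"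
  shows "\<exists>\<phi> L. strict_mono \<phi> \<and> (\<forall>i. eventually (\<lambda>n. X i (\<phi> n) = L i) sequentially)"
proof -
  define P where
    "P k s \<longleftrightarrow> (\<exists>v. eventually (\<lambda>n. X (from_nat_into UNIV k) (s n) = v) sequentially)" for k s
  interpret subseqs P
  proof
    fix k and s :: "nat \<Rightarrow> nat"
    have "finite (range (\<lambda>n. X (from_nat_into UNIV k) (s n)))"
      by (rule finite_subset[OF _ assms(2)]) auto
    from finite_range_imp_const_subseq[OF this]
    show "\<exists>r'. strict_mono r' \<and> P k (s \<circ> r')"
      unfolding P_def by (auto intro: always_eventually)
  qed
  have "P k diagseq" for k
  proof -
    have "P k (diagseq \<circ> ((+) (Suc k)))"
    proof (rule diagseq_holds)
      fix r s :: "nat \<Rightarrow> nat" and n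
      assume "strict_mono r" "P n s"
      then obtain v where "eventually (\<lambda>m. X (from_nat_into UNIV n) (s m) = v) sequentially"
        unfolding P_def by blast
      from eventually_compose_filterlim[OF this filterlim_subseq[OF \<open>strict_mono r\<close>]]
      show "P n (s \<circ> r)"
        unfolding P_def o_def by blast
    qed
    then obtain v where
      "eventually (\<lambda>n. X (from_nat_into UNIV k) (diagseq (n + Suc k)) = v) sequentially"
      unfolding P_def by (auto simp: add.commute)
    then show ?thesis
      using eventually_sequentially_seg[of "\<lambda>n. X (from_nat_into UNIV k) (diagseq n) = v"]
      unfolding P_def by blast
  qed
  have "\<exists>v. eventually (\<lambda>n. X i (diagseq n) = v) sequentially" for i
  proof -
    obtain k where "from_nat_into UNIV k = i"
      using from_nat_into_surj[OF assms(1) UNIV_I] by blast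
    with \<open>P k diagseq\<close> show ?thesis
      unfolding P_def by blast
  qed
  then obtain L where "\<forall>i. eventually (\<lambda>n. X i (diagseq n) = L i) sequentially"
    by metis
  with subseq_diagseq show ?thesis by blast
qed

lemma almost_linear_shift:
  fixes f :: "nat \<Rightarrow> nat" and c :: real
  assumes "\<forall>m. \<exists>N. \<forall>n\<ge>N. \<bar>real (f (n + m)) - real (f n) - c * real m\<bar> \<le> 1"
  shows "eventually (\<lambda>U. \<bar>real (f (nat (U - j))) - real (f (nat U)) + c * j\<bar> \<le> 1) at_top"
  unfolding eventually_at_top_linorder
proof (cases "j \<ge> 0")
  case True
  obtain N where N: "\<forall>n\<ge>N. \<bar>real (f (n + nat j)) - real (f n) - c * real (nat j)\<bar> \<le> 1"
    using assms by blast
  show "\<exists>N. \<forall>U\<ge>N. \<bar>real (f (nat (U - j))) - real (f (nat U)) + c * j\<bar> \<le> 1"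
  proof (intro exI allI impI)
    fix U :: int
    assume U: "U \<ge> int N + j"
    then have "nat (U - j) \<ge> N" "nat (U - j) + nat j = nat U"
      using True by linarith+
    with N True have "\<bar>real (f (nat U)) - real (f (nat (U - j))) - c * j\<bar> \<le> 1"
      by force
    then show "\<bar>real (f (nat (U - j))) - real (f (nat U)) + c * j\<bar> \<le> 1"
      by arith
  qed
next
  case False
  obtain N where N: "\<forall>n\<ge>N. \<bar>real (f (n + nat (- j))) - real (f n) - c * real (nat (- j))\<bar> \<le> 1"
    using assms by blast
  show "\<exists>N. \<forall>U\<ge>N. \<bar>real (f (nat (U - j))) - real (f (nat U)) + c * j\<bar> \<le> 1"
  proof (intro exI allI impI)
    fix U :: int
    assume U: "U \<ge> int N"
    then have "nat U \<ge> N" "nat U + nat (- j) = nat (U - j)"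
      using False by linarith+
    then show "\<bar>real (f (nat (U - j))) - real (f (nat U)) + c * j\<bar> \<le> 1"
      using N False by auto
  qed
qed

definition between_horoballs :: "'a::group_add set \<Rightarrow> 'b::group_add set \<Rightarrow> real \<Rightarrow> ('a \<times> 'b) set \<Rightarrow> bool"
  where "between_horoballs S S' c C \<longleftrightarrow>
    (\<exists>\<theta>\<in>horoboundary (\<lambda>x y. real (word_dist S x y)) 0.
     \<exists>\<theta>'\<in>horoboundary (\<lambda>x y. real (word_dist S' x y)) 0.
     \<exists>\<delta>. horoball (pair_horo c \<theta> \<theta>') (\<delta> - 2 / c) \<subseteq> C \<and> C \<subseteq> horoball (pair_horo c \<theta> \<theta>') (\<delta> + 1 / c))"

locale diamond_sequence =
  fixes S :: "'a::group_add set" and S' :: "'b::group_add set"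
    and c :: real and f :: "nat \<Rightarrow> nat" and r :: "nat \<Rightarrow> nat" and xs :: "nat \<Rightarrow> 'a \<times> 'b"
  assumes fin: "finite S" "finite S'"
    and gen: "generates S" "generates S'"
    and c_pos: "c > 0"
    and f_mono: "mono f"
    and f_lin: "\<forall>m. \<exists>N. \<forall>n\<ge>N. \<bar>real (f (n + m)) - real (f n) - c * real m\<bar> \<le> 1"
    and esc: "filterlim (\<lambda>n. word_dist S (fst (xs n)) 0) at_top sequentially"
      "filterlim (\<lambda>n. word_dist S' (snd (xs n)) 0) at_top sequentially"
begin

definition \<beta> :: "nat \<Rightarrow> 'a \<Rightarrow> int" where
  "\<beta> n y = int (word_dist S (fst (xs n)) y) - int (word_dist S (fst (xs n)) 0)"

definition \<beta>' :: "nat \<Rightarrow> 'b \<Rightarrow> int" where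
  "\<beta>' n y' = int (word_dist S' (snd (xs n)) y') - int (word_dist S' (snd (xs n)) 0)"

definition u :: "nat \<Rightarrow> int" where
  "u n = int (r n) - int (word_dist S (fst (xs n)) 0)"

definition w :: "nat \<Rightarrow> int" where
  "w n = int (f (nat (u n))) - int (word_dist S' (snd (xs n)) 0)"

definition D :: "nat \<Rightarrow> ('a \<times> 'b) set" where
  "D n = perturbed_diamond S S' f (r n) (xs n)"

lemma abs_\<beta>_le: "\<bar>\<beta> n y\<bar> \<le> int (word_length S y)"
  unfolding \<beta>_def by (rule abs_word_dist_diff_le[OF gen(1)])

lemma abs_\<beta>'_le: "\<bar>\<beta>' n y'\<bar> \<le> int (word_length S' y')"
  unfolding \<beta>'_def by (rule abs_word_dist_diff_le[OF gen(2)])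

lemma horo_fun_eq_\<beta>:
  "horo_fun (\<lambda>x y. real (word_dist S x y)) 0 (fst (xs n)) y = real_of_int (\<beta> n y)"
  "horo_fun (\<lambda>x y. real (word_dist S' x y)) 0 (snd (xs n)) y' = real_of_int (\<beta>' n y')"
  by (simp_all add: horo_fun_def \<beta>_def \<beta>'_def)

lemma mem_D_iff:
  "(y, y') \<in> D n \<longleftrightarrow>
     \<beta> n y \<le> u n \<and> \<beta>' n y' + int (word_dist S' (snd (xs n)) 0) \<le> int (f (nat (u n - \<beta> n y)))"
proof -
  have "nat (u n - \<beta> n y) = r n - word_dist S (fst (xs n)) y"
    by (simp add: u_def \<beta>_def)
  then show ?thesis
    by (auto simp: D_def mem_perturbed_diamond_iff \<beta>_def \<beta>'_def u_def)
qed

lemma mem_D_approx: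
  assumes "\<beta> n y \<le> u n"
    and "\<bar>real (f (nat (u n - \<beta> n y))) - real (f (nat (u n))) + c * \<beta> n y\<bar> \<le> 1"
  shows "(y, y') \<in> D n \<Longrightarrow> c * \<beta> n y + \<beta>' n y' \<le> w n + 1"
    and "c * \<beta> n y + \<beta>' n y' \<le> w n - 1 \<Longrightarrow> (y, y') \<in> D n"
proof -
  have "(y, y') \<in> D n \<longleftrightarrow>
      real_of_int (\<beta>' n y') \<le> w n + (real (f (nat (u n - \<beta> n y))) - real (f (nat (u n))))"
    using assms(1) unfolding mem_D_iff w_def by linarith
  then show "(y, y') \<in> D n \<Longrightarrow> c * \<beta> n y + \<beta>' n y' \<le> w n + 1"
    and "c * \<beta> n y + \<beta>' n y' \<le> w n - 1 \<Longrightarrow> (y, y') \<in> D n"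
    using assms(2) by (auto simp: abs_le_iff)
qed

lemma eventually_mem_D_approx:
  assumes "filterlim (\<lambda>n. u (\<psi> n)) at_top sequentially"
  shows "eventually (\<lambda>n.
      ((y, y') \<in> D (\<psi> n) \<longrightarrow> c * \<beta> (\<psi> n) y + \<beta>' (\<psi> n) y' \<le> w (\<psi> n) + 1) \<and>
      (c * \<beta> (\<psi> n) y + \<beta>' (\<psi> n) y' \<le> w (\<psi> n) - 1 \<longrightarrow> (y, y') \<in> D (\<psi> n))) sequentially"
proof -
  define k where "k = int (word_length S y)"
  have "eventually (\<lambda>n. \<forall>j\<in>{-k..k}.
      \<bar>real (f (nat (u (\<psi> n) - j))) - real (f (nat (u (\<psi> n)))) + c * j\<bar> \<le> 1) sequentially"
    using eventually_compose_filterlim[OF almost_linear_shift[OF f_lin] assms]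
    by (intro eventually_ball_finite) auto
  moreover have "eventually (\<lambda>n. k \<le> u (\<psi> n)) sequentially"
    using assms unfolding filterlim_at_top by blast
  ultimately show ?thesis
  proof eventually_elim
    case (elim n)
    moreover have "\<beta> (\<psi> n) y \<in> {-k..k}"
      using abs_\<beta>_le[of "\<psi> n" y] by (simp add: k_def abs_le_iff)
    ultimately show ?case
      using mem_D_approx[of "\<psi> n" y y'] by auto
  qed
qed

lemma fell_converges_empty_if_u_bounded_above:
  assumes "strict_mono \<psi>" "eventually (\<lambda>n. u (\<psi> n) \<le> M) sequentially"
  shows "fell_converges (\<lambda>n. D (\<psi> n)) {}"
proof (rule fell_convergesI)
  fix z :: "'a \<times> 'b"
  obtain y y' where z: "z = (y, y')" by fastforce
  define B where "B = f (nat (M + int (word_length S y)))"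
  have "eventually (\<lambda>n. Suc (B + word_length S' y') \<le> word_dist S' (snd (xs (\<psi> n))) 0) sequentially"
    using filterlim_compose[OF esc(2) filterlim_subseq[OF assms(1)]]
    unfolding filterlim_at_top by blast
  with assms(2) show "eventually (\<lambda>n. z \<in> D (\<psi> n) \<longleftrightarrow> z \<in> {}) sequentially"
  proof eventually_elim
    case (elim n)
    have "nat (u (\<psi> n) - \<beta> (\<psi> n) y) \<le> nat (M + int (word_length S y))"
      using elim(1) abs_\<beta>_le[of "\<psi> n" y] by linarith
    then have "f (nat (u (\<psi> n) - \<beta> (\<psi> n) y)) \<le> B"
      unfolding B_def using f_mono by (rule monoD[rotated])
    then show ?case
      using elim(2) abs_\<beta>'_le[of "\<psi> n" y'] by (auto simp: z mem_D_iff)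
  qed
qed

lemma fell_converges_UNIV_if_w_at_top:
  assumes "filterlim (\<lambda>n. u (\<psi> n)) at_top sequentially"
    and "filterlim (\<lambda>n. w (\<psi> n)) at_top sequentially"
  shows "fell_converges (\<lambda>n. D (\<psi> n)) UNIV"
proof (rule fell_convergesI)
  fix z :: "'a \<times> 'b"
  obtain y y' where z: "z = (y, y')" by fastforce
  have "eventually (\<lambda>n. c * word_length S y + word_length S' y' + 1 \<le> real_of_int (w (\<psi> n)))
      sequentially"
    using filterlim_compose[OF filterlim_real_of_int_at_top assms(2)]
    unfolding filterlim_at_top by blast
  with eventually_mem_D_approx[OF assms(1), of y y']
  show "eventually (\<lambda>n. z \<in> D (\<psi> n) \<longleftrightarrow> z \<in> UNIV) sequentially"
  proof eventually_elim
    case (elim n)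
    have "c * \<beta> (\<psi> n) y \<le> c * word_length S y"
      using abs_\<beta>_le[of "\<psi> n" y] c_pos by (simp add: abs_le_iff)
    then show ?case
      using elim abs_\<beta>'_le[of "\<psi> n" y'] by (auto simp: z abs_le_iff)
  qed
qed

lemma fell_converges_empty_if_w_at_bot:
  assumes "filterlim (\<lambda>n. u (\<psi> n)) at_top sequentially"
    and "filterlim (\<lambda>n. w (\<psi> n)) at_bot sequentially"
  shows "fell_converges (\<lambda>n. D (\<psi> n)) {}"
proof (rule fell_convergesI)
  fix z :: "'a \<times> 'b"
  obtain y y' where z: "z = (y, y')" by fastforce
  define R where "R = - c * word_length S y - word_length S' y' - 2"
  have "eventually (\<lambda>n. w (\<psi> n) \<le> \<lfloor>R\<rfloor>) sequentially"
    using assms(2) unfolding filterlim_at_bot by blast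
  with eventually_mem_D_approx[OF assms(1), of y y']
  show "eventually (\<lambda>n. z \<in> D (\<psi> n) \<longleftrightarrow> z \<in> {}) sequentially"
  proof eventually_elim
    case (elim n)
    have "c * - real (word_length S y) \<le> c * \<beta> (\<psi> n) y"
      unfolding mult_le_cancel_left_pos[OF c_pos] using abs_\<beta>_le[of "\<psi> n" y] by linarith
    then show ?case
      using elim abs_\<beta>'_le[of "\<psi> n" y'] unfolding le_floor_iff R_def by (auto simp: z abs_le_iff)
  qed
qed

lemma between_horoballs_if_eventually_const:
  assumes "strict_mono \<psi>" "filterlim (\<lambda>n. u (\<psi> n)) at_top sequentially"
    and \<theta>: "\<And>y. eventually (\<lambda>n. real_of_int (\<beta> (\<psi> n) y) = \<theta> y) sequentially"
    and \<theta>': "\<And>y'. eventually (\<lambda>n. real_of_int (\<beta>' (\<psi> n) y') = \<theta>' y') sequentially"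
    and w0: "eventually (\<lambda>n. w (\<psi> n) = w0) sequentially"
    and C: "\<And>z. eventually (\<lambda>n. z \<in> D (\<psi> n) \<longleftrightarrow> z \<in> C) sequentially"
  shows "between_horoballs S S' c C"
proof -
  have "\<theta> \<in> horoboundary (\<lambda>x y. real (word_dist S x y)) 0"
    by (rule escaping_horofunction_limit_in_horoboundary[OF fin(1) gen(1)
          filterlim_compose[OF esc(1) filterlim_subseq[OF assms(1)]]])
      (simp add: horo_fun_eq_\<beta> \<theta>)
  moreover have "\<theta>' \<in> horoboundary (\<lambda>x y. real (word_dist S' x y)) 0"
    by (rule escaping_horofunction_limit_in_horoboundary[OF fin(2) gen(2)
          filterlim_compose[OF esc(2) filterlim_subseq[OF assms(1)]]])
      (simp add: horo_fun_eq_\<beta> \<theta>')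
  moreover have approx: "((y, y') \<in> C \<longrightarrow> c * \<theta> y + \<theta>' y' \<le> w0 + 1) \<and>
      (c * \<theta> y + \<theta>' y' \<le> w0 - 1 \<longrightarrow> (y, y') \<in> C)" for y y'
  proof -
    have "eventually (\<lambda>n. ((y, y') \<in> C \<longrightarrow> c * \<theta> y + \<theta>' y' \<le> w0 + 1) \<and>
        (c * \<theta> y + \<theta>' y' \<le> w0 - 1 \<longrightarrow> (y, y') \<in> C)) sequentially"
      using eventually_mem_D_approx[OF assms(2), of y y'] \<theta>[of y] \<theta>'[of y'] w0 C[of "(y, y')"]
      by eventually_elim auto
    then show ?thesis
      using eventually_happens'[OF sequentially_bot] by blast
  qed
  have horoball_iff: "(y, y') \<in> horoball (pair_horo c \<theta> \<theta>') \<delta> \<longleftrightarrow> c * \<theta> y + \<theta>' y' \<le> c * \<delta>"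
    for y y' \<delta>
  proof -
    have "\<theta> y + \<theta>' y' / c \<le> \<delta> \<longleftrightarrow> c * (\<theta> y + \<theta>' y' / c) \<le> c * \<delta>"
      by (rule mult_le_cancel_left_pos[OF c_pos, symmetric])
    also have "c * (\<theta> y + \<theta>' y' / c) = c * \<theta> y + \<theta>' y'"
      using c_pos by (simp add: distrib_left)
    finally show ?thesis
      by (simp add: horoball_def pair_horo_def)
  qed
  have "horoball (pair_horo c \<theta> \<theta>') (w0 / c - 2 / c) \<subseteq> C"
    and "C \<subseteq> horoball (pair_horo c \<theta> \<theta>') (w0 / c + 1 / c)"
    using approx c_pos by (auto simp: horoball_iff right_diff_distrib distrib_left)
  ultimately show ?thesis
    unfolding between_horoballs_def by blast
qed

lemma exists_between_horoballs_limit: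
  assumes "strict_mono \<psi>" "filterlim (\<lambda>n. u (\<psi> n)) at_top sequentially"
    and "\<forall>n. \<bar>w (\<psi> n)\<bar> \<le> B"
  shows "\<exists>\<phi> C. strict_mono \<phi> \<and> fell_converges (\<lambda>n. D (\<phi> n)) C \<and> between_horoballs S S' c C"
proof -
  define X where "X z n = (\<beta> (\<psi> n) (fst z), \<beta>' (\<psi> n) (snd z), w (\<psi> n), z \<in> D (\<psi> n))" for z n
  have "countable (UNIV :: ('a \<times> 'b) set)"
    using countable_SIGMA[OF countable_UNIV_if_generates[OF fin(1) gen(1)]
        countable_UNIV_if_generates[OF fin(2) gen(2)]] by simp
  moreover have "finite (range (X z))" for z
  proof (rule finite_subset)
    have "X z n \<in> {- int (word_length S (fst z))..int (word_length S (fst z))} \<times>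
        {- int (word_length S' (snd z))..int (word_length S' (snd z))} \<times> {-B..B} \<times> UNIV" for n
      using abs_\<beta>_le[of "\<psi> n" "fst z"] abs_\<beta>'_le[of "\<psi> n" "snd z"] assms(3)[rule_format, of n]
      by (auto simp: X_def abs_le_iff)
    then show "range (X z) \<subseteq> {- int (word_length S (fst z))..int (word_length S (fst z))} \<times>
        {- int (word_length S' (snd z))..int (word_length S' (snd z))} \<times> {-B..B} \<times> UNIV"
      by blast
  qed simp
  ultimately obtain \<phi> L where \<phi>: "strict_mono \<phi>" "\<forall>z. eventually (\<lambda>n. X z (\<phi> n) = L z) sequentially"
    using diagonal_subseq_eventually_const by blast
  have \<psi>\<phi>: "strict_mono (\<lambda>n. \<psi> (\<phi> n))"
    using strict_mono_o[OF assms(1) \<phi>(1)] by (simp add: o_def)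
  define C where "C = {z. snd (snd (snd (L z)))}"
  have C: "eventually (\<lambda>n. z \<in> D (\<psi> (\<phi> n)) \<longleftrightarrow> z \<in> C) sequentially" for z
    using \<phi>(2)[rule_format, of z] by eventually_elim (simp add: X_def C_def prod_eq_iff)
  have "between_horoballs S S' c C"
  proof (rule between_horoballs_if_eventually_const[OF \<psi>\<phi>
        filterlim_compose[OF assms(2) filterlim_subseq[OF \<phi>(1)]] _ _ _ C])
    \<comment> \<open>the first component of X z only depends on fst z, so any second coordinate will do\<close>
    show "eventually (\<lambda>n. real_of_int (\<beta> (\<psi> (\<phi> n)) y) = of_int (fst (L (y, 0)))) sequentially" for y
      using \<phi>(2)[rule_format, of "(y, 0)"] by eventually_elim (simp add: X_def prod_eq_iff)
    show "eventually (\<lambda>n. real_of_int (\<beta>' (\<psi> (\<phi> n)) y') = of_int (fst (snd (L (0, y'))))) sequentially"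
      for y'
      using \<phi>(2)[rule_format, of "(0, y')"] by eventually_elim (simp add: X_def prod_eq_iff)
    show "eventually (\<lambda>n. w (\<psi> (\<phi> n)) = fst (snd (snd (L 0)))) sequentially"
      using \<phi>(2)[rule_format, of 0] by eventually_elim (simp add: X_def prod_eq_iff)
  qed
  with \<psi>\<phi> fell_convergesI[of "\<lambda>n. D (\<psi> (\<phi> n))", OF C] show ?thesis
    by blast
qed

lemma exists_fell_limit:
  "\<exists>\<psi> C. strict_mono \<psi> \<and> fell_converges (\<lambda>n. D (\<psi> n)) C \<and>
     (C = {} \<or> C = UNIV \<or> between_horoballs S S' c C)"
proof -
  have escaping_u: ?thesis if \<phi>: "strict_mono \<phi>" "filterlim (\<lambda>n. u (\<phi> n)) at_top sequentially" for \<phi>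
  proof -
    have sub: "strict_mono (\<phi> \<circ> \<phi>')" "filterlim (\<lambda>n. u ((\<phi> \<circ> \<phi>') n)) at_top sequentially"
      if "strict_mono \<phi>'" for \<phi>'
      using strict_mono_o[OF \<phi>(1) that] filterlim_compose[OF \<phi>(2) filterlim_subseq[OF that]] by auto
    show ?thesis
    proof (cases rule: int_seq_subseq_cases[of "\<lambda>n. w (\<phi> n)"])
      case (1 \<phi>')
      then have "fell_converges (\<lambda>n. D ((\<phi> \<circ> \<phi>') n)) UNIV"
        using fell_converges_UNIV_if_w_at_top[OF sub(2)] by simp
      with sub(1)[OF 1(1)] show ?thesis by blast
    next
      case (2 \<phi>')
      then have "fell_converges (\<lambda>n. D ((\<phi> \<circ> \<phi>') n)) {}"
        using fell_converges_empty_if_w_at_bot[OF sub(2)] by simp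
      with sub(1)[OF 2(1)] show ?thesis by blast
    next
      case (3 \<phi>' B)
      then show ?thesis
        using exists_between_horoballs_limit[OF sub, of \<phi>' B] by auto
    qed
  qed
  show ?thesis
  proof (cases rule: int_seq_subseq_cases[of u])
    case (1 \<phi>)
    then show ?thesis by (rule escaping_u)
  next
    case (2 \<phi>)
    then have "eventually (\<lambda>n. u (\<phi> n) \<le> 0) sequentially"
      unfolding filterlim_at_bot by blast
    with 2 show ?thesis
      using fell_converges_empty_if_u_bounded_above by blast
  next
    case (3 \<phi> B)
    then have "eventually (\<lambda>n. u (\<phi> n) \<le> B) sequentially"
      by (auto simp: abs_le_iff)
    with 3 show ?thesis
      using fell_converges_empty_if_u_bounded_above by blast
  qed
qed

end

theorem lemma3p3:
  fixes S :: "'a::group_add set" and S' :: "'b::group_add set"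
    and a a' c :: real and f :: "nat \<Rightarrow> nat" and r :: "nat \<Rightarrow> nat"
    and xs :: "nat \<Rightarrow> 'a \<times> 'b"
  assumes fin: "finite S" "finite S'"
    and gen: "generates S" "generates S'"
    and rate: "(\<lambda>n. real (ball_volume S n) powr (1 / real n)) \<longlonglongrightarrow> a"
              "(\<lambda>n. real (ball_volume S' n) powr (1 / real n)) \<longlonglongrightarrow> a'"
    and rate_gt: "a > 1" "a' > 1"
    and c_def: "c = ln a / ln a'"
    and f_mono: "mono f" and f0: "f 0 = 0"
    and r_mono: "strict_mono r"
    and ratio: "\<exists>m M. 0 < m \<and> (\<forall>n. m \<le> real (ball_volume S' (f (r n))) / real (ball_volume S (r n))
                       \<and> real (ball_volume S' (f (r n))) / real (ball_volume S (r n)) \<le> M)"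
    and f_lin: "\<forall>m. \<exists>N. \<forall>n\<ge>N. \<bar>real (f (n + m)) - real (f n) - c * real m\<bar> \<le> 1"
    and esc: "filterlim (\<lambda>n. word_dist S (fst (xs n)) 0) at_top sequentially"
             "filterlim (\<lambda>n. word_dist S' (snd (xs n)) 0) at_top sequentially"
  shows "\<exists>\<phi> C. strict_mono \<phi> \<and>
           fell_converges (\<lambda>k. perturbed_diamond S S' f (r (\<phi> k)) (xs (\<phi> k))) C \<and>
           (C = {} \<or> C = UNIV \<or>
            (\<exists>\<theta>\<in>horoboundary (\<lambda>x y. real (word_dist S x y)) 0.
             \<exists>\<theta>'\<in>horoboundary (\<lambda>x y. real (word_dist S' x y)) 0.
             \<exists>\<delta>::real.
               horoball (pair_horo c \<theta> \<theta>') (\<delta> - 2 / c) \<subseteq> C \<and>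
               C \<subseteq> horoball (pair_horo c \<theta> \<theta>') (\<delta> + 1 / c)))"
proof -
  \<comment> \<open>of the growth hypotheses only c > 0 is needed; rate, f0, r_mono and ratio are unused\<close>
  have "c > 0"
    using rate_gt by (simp add: c_def)
  then interpret diamond_sequence S S' c f r xs
    using fin gen f_mono f_lin esc by unfold_locales
  from exists_fell_limit show ?thesis
    unfolding D_def between_horoballs_def .
qed

end
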